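(* Let $(L,[\cdot,\cdot],\alpha)$ be a Hom-Lie algebra over a field $F$ and let $\mu:L\to[0,1]$ be a fuzzy subset of $L$. Then the following are equivalent: (i) $\mu$ is a fuzzy Hom-Lie subalgebra of $L$; (ii) for every $t\in\mathrm{Im}(\mu)$ such that the strong upper level set $U(\mu^>,t)=\{x\in L:\mu(x)>t\}$ is nonempty, $U(\mu^>,t)$ is a Hom-Lie subalgebra of $L$.
   Context: A Hom-Lie algebra over $F$ is a triple $(L,[\cdot,\cdot],\alpha)$ with $L$ an $F$-vector space, $\alpha:L\to L$ linear and $[\cdot,\cdot]:L\times L\to L$ bilinear, such that $[x,y]=-[y,x]$ and $[\alpha(x),[y,z]]+[\alpha(y),[z,x]]+[\alpha(z),[x,y]]=0$ for all $x,y,z\in L$. A Hom-Lie subalgebra is a subspace $H$ with $\alpha(H)\subseteq H$ and $[x,y]\in H$ for all $x,y\in H$. A fuzzy subset of $L$ is a map $\mu:L\to[0,1]$. Writing $a\wedge b=\min\{a,b\}$, $\mu$ is a fuzzy Hom-Lie subalgebra if for all $x,y\in L$, $c\in F$: $\mu(x+y)\ge\mu(x)\wedge\mu(y)$, $\mu(cx)\ge\mu(x)$, $\mu([x,y])\ge\mu(x)\wedge\mu(y)$, and $\mu(\alpha(x))\ge\mu(x)$. *)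

theory Defs
  imports Complex_Main
begin

definition hom_lie_algebra ::
  "('a::field \<Rightarrow> 'v::ab_group_add \<Rightarrow> 'v) \<Rightarrow> ('v \<Rightarrow> 'v \<Rightarrow> 'v) \<Rightarrow> ('v \<Rightarrow> 'v) \<Rightarrow> bool" where
  "hom_lie_algebra scale br alpha \<longleftrightarrow>
     vector_space scale \<and>
     Vector_Spaces.linear scale scale alpha \<and>
     (\<forall>x y z. br (x + y) z = br x z + br y z) \<and>
     (\<forall>x y z. br x (y + z) = br x y + br x z) \<and>
     (\<forall>c x y. br (scale c x) y = scale c (br x y)) \<and>
     (\<forall>c x y. br x (scale c y) = scale c (br x y)) \<and>
     (\<forall>x y. br x y = - br y x) \<and>
     (\<forall>x y z. br (alpha x) (br y z) + br (alpha y) (br z x) + br (alpha z) (br x y) = 0)"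

definition hom_lie_subalgebra ::
  "('a::field \<Rightarrow> 'v::ab_group_add \<Rightarrow> 'v) \<Rightarrow> ('v \<Rightarrow> 'v \<Rightarrow> 'v) \<Rightarrow> ('v \<Rightarrow> 'v) \<Rightarrow> 'v set \<Rightarrow> bool" where
  "hom_lie_subalgebra scale br alpha H \<longleftrightarrow>
     module.subspace scale H \<and> alpha ` H \<subseteq> H \<and> (\<forall>x\<in>H. \<forall>y\<in>H. br x y \<in> H)"

definition fuzzy_subset :: "('v \<Rightarrow> real) \<Rightarrow> bool" where
  "fuzzy_subset mu \<longleftrightarrow> (\<forall>x. 0 \<le> mu x \<and> mu x \<le> 1)"

definition fuzzy_hom_lie_subalgebra ::
  "('a::field \<Rightarrow> 'v::ab_group_add \<Rightarrow> 'v) \<Rightarrow> ('v \<Rightarrow> 'v \<Rightarrow> 'v) \<Rightarrow> ('v \<Rightarrow> 'v) \<Rightarrow> ('v \<Rightarrow> real) \<Rightarrow> bool" where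
  "fuzzy_hom_lie_subalgebra scale br alpha mu \<longleftrightarrow>
     (\<forall>x y. mu (x + y) \<ge> min (mu x) (mu y)) \<and>
     (\<forall>c x. mu (scale c x) \<ge> mu x) \<and>
     (\<forall>x y. mu (br x y) \<ge> min (mu x) (mu y)) \<and>
     (\<forall>x. mu (alpha x) \<ge> mu x)"

definition strong_level_set :: "('v \<Rightarrow> real) \<Rightarrow> real \<Rightarrow> 'v set" where
  "strong_level_set mu t = {x. mu x > t}"

end

theory Submission
  imports Defs
begin

text \<open>Each defining inequality of a fuzzy Hom-Lie subalgebra, \<open>min (\<mu> x) (\<mu> y) \<le> \<mu> (f x y)\<close>
  or \<open>\<mu> x \<le> \<mu> (g x)\<close>, is equivalent to closedness of every strong level set under the
  corresponding operation: were it to fail at \<open>x, y\<close>, then \<open>x\<close> and \<open>y\<close> would lie in the strong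
  level set at the level \<open>t = \<mu> (f x y)\<close>, a value of \<mu>, while \<open>f x y\<close> would not. A nonempty
  set closed under addition and scaling contains \<open>0 = 0 \<cdot> x\<close>, so closedness of the nonempty
  level sets is exactly the subalgebra property.\<close>

lemma mem_strong_level_set: "x \<in> strong_level_set mu t \<longleftrightarrow> t < mu x"
  by (simp add: strong_level_set_def)

lemma min_le_iff_strong_level_sets_closed:
  fixes mu :: "'v \<Rightarrow> real"
  shows "(\<forall>x y. min (mu x) (mu y) \<le> mu (f x y)) \<longleftrightarrow>
    (\<forall>t\<in>range mu. \<forall>x\<in>strong_level_set mu t. \<forall>y\<in>strong_level_set mu t.
       f x y \<in> strong_level_set mu t)"
proof (intro iffI allI)
  assume le: "\<forall>x y. min (mu x) (mu y) \<le> mu (f x y)"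
  show "\<forall>t\<in>range mu. \<forall>x\<in>strong_level_set mu t. \<forall>y\<in>strong_level_set mu t.
       f x y \<in> strong_level_set mu t"
  proof (intro ballI)
    fix t x y
    assume "x \<in> strong_level_set mu t" "y \<in> strong_level_set mu t"
    with le [rule_format, of x y] show "f x y \<in> strong_level_set mu t"
      unfolding mem_strong_level_set by linarith
  qed
next
  fix x y
  assume closed: "\<forall>t\<in>range mu. \<forall>x\<in>strong_level_set mu t. \<forall>y\<in>strong_level_set mu t.
       f x y \<in> strong_level_set mu t"
  show "min (mu x) (mu y) \<le> mu (f x y)"
  proof (rule ccontr)
    assume "\<not> ?thesis"
    then have "x \<in> strong_level_set mu (mu (f x y))" "y \<in> strong_level_set mu (mu (f x y))"
      by (simp_all add: mem_strong_level_set)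
    with closed have "f x y \<in> strong_level_set mu (mu (f x y))" by blast
    then show False by (simp add: mem_strong_level_set)
  qed
qed

lemma le_iff_strong_level_sets_closed:
  fixes mu :: "'v \<Rightarrow> real"
  shows "(\<forall>x. mu x \<le> mu (g x)) \<longleftrightarrow>
    (\<forall>t\<in>range mu. \<forall>x\<in>strong_level_set mu t. g x \<in> strong_level_set mu t)"
proof (intro iffI allI)
  assume le: "\<forall>x. mu x \<le> mu (g x)"
  show "\<forall>t\<in>range mu. \<forall>x\<in>strong_level_set mu t. g x \<in> strong_level_set mu t"
  proof (intro ballI)
    fix t x
    assume "x \<in> strong_level_set mu t"
    with le [rule_format, of x] show "g x \<in> strong_level_set mu t"
      by (simp add: mem_strong_level_set)
  qed
next
  fix x
  assume closed: "\<forall>t\<in>range mu. \<forall>x\<in>strong_level_set mu t. g x \<in> strong_level_set mu t"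
  show "mu x \<le> mu (g x)"
  proof (rule ccontr)
    assume "\<not> ?thesis"
    then have "x \<in> strong_level_set mu (mu (g x))"
      by (simp add: mem_strong_level_set)
    with closed have "g x \<in> strong_level_set mu (mu (g x))" by blast
    then show False by (simp add: mem_strong_level_set)
  qed
qed

lemma (in module) subspace_iff_nonempty_closed:
  "subspace S \<longleftrightarrow>
    S \<noteq> {} \<and> (\<forall>x\<in>S. \<forall>y\<in>S. x + y \<in> S) \<and> (\<forall>c. \<forall>x\<in>S. scale c x \<in> S)"
proof
  assume "S \<noteq> {} \<and> (\<forall>x\<in>S. \<forall>y\<in>S. x + y \<in> S) \<and> (\<forall>c. \<forall>x\<in>S. scale c x \<in> S)"
  moreover from this obtain x where "x \<in> S" by blast
  ultimately have "scale 0 x \<in> S" by blast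
  then have "0 \<in> S" by simp
  with \<open>S \<noteq> {} \<and> _\<close> show "subspace S" by (simp add: subspace_def)
qed (auto simp: subspace_def)

lemma hom_lie_subalgebra_iff_nonempty_closed:
  assumes "hom_lie_algebra scale br alpha"
  shows "hom_lie_subalgebra scale br alpha H \<longleftrightarrow>
    H \<noteq> {} \<and> (\<forall>x\<in>H. \<forall>y\<in>H. x + y \<in> H) \<and> (\<forall>c. \<forall>x\<in>H. scale c x \<in> H) \<and>
    (\<forall>x\<in>H. \<forall>y\<in>H. br x y \<in> H) \<and> (\<forall>x\<in>H. alpha x \<in> H)"
proof -
  have "module scale"
    using assms by (simp add: hom_lie_algebra_def vector_space_def module_def)
  then show ?thesis
    by (simp add: hom_lie_subalgebra_def module.subspace_iff_nonempty_closed image_subset_iff conj_ac)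
qed

theorem theorem4p3:
  fixes scale :: "'a::field \<Rightarrow> 'v::ab_group_add \<Rightarrow> 'v"
    and br :: "'v \<Rightarrow> 'v \<Rightarrow> 'v" and alpha :: "'v \<Rightarrow> 'v" and mu :: "'v \<Rightarrow> real"
  assumes "hom_lie_algebra scale br alpha"
    and "fuzzy_subset mu"
  shows "fuzzy_hom_lie_subalgebra scale br alpha mu \<longleftrightarrow>
    (\<forall>t \<in> range mu. strong_level_set mu t \<noteq> {} \<longrightarrow>
        hom_lie_subalgebra scale br alpha (strong_level_set mu t))"
proof -
  let ?closed = "\<lambda>H. (\<forall>x\<in>H. \<forall>y\<in>H. x + y \<in> H) \<and> (\<forall>c. \<forall>x\<in>H. scale c x \<in> H) \<and>
    (\<forall>x\<in>H. \<forall>y\<in>H. br x y \<in> H) \<and> (\<forall>x\<in>H. alpha x \<in> H)"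
  have "fuzzy_hom_lie_subalgebra scale br alpha mu \<longleftrightarrow>
      (\<forall>t\<in>range mu. ?closed (strong_level_set mu t))"
    unfolding fuzzy_hom_lie_subalgebra_def min_le_iff_strong_level_sets_closed
      le_iff_strong_level_sets_closed
    by blast
  also have "\<dots> \<longleftrightarrow> (\<forall>t \<in> range mu. strong_level_set mu t \<noteq> {} \<longrightarrow>
      hom_lie_subalgebra scale br alpha (strong_level_set mu t))"
    unfolding hom_lie_subalgebra_iff_nonempty_closed [OF assms(1)] by blast
  finally show ?thesis .
qed

end
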